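(* Let $0<\delta<1$, $t>1$, $\lambda_c:=1/(t^{1-\delta}-1)$, $\lambda_c\le\lambda\le t^{1-\delta}-1$, write $\lambda=\lambda_c(1+\Lambda)$ and $\omega:=\sqrt{\frac{\lambda_c t}{2}}\frac{\ln(1+\Lambda)}{1+\lambda_c}$. Let $a=a(t)$ satisfy $t^{-\delta/2}\ll a\ll t^{-\delta/3}$, set $k:=t^{\delta-1}(1-a)$, and let $$J_{B1}(t;\lambda):=\int_{1-t^{\delta-1}}^{1-k}(1-z)^{-1/2}{\rm e}^{{\rm i} tF(z;\lambda)}\,{\rm d} z.$$ Then, as $t\to\infty$, $$J_{B1}(t;\lambda)=\exp\!\big({\rm i} tF(1-t^{\delta-1};\lambda)-{\rm i}\omega^2\big)\,t^{-1/2}\sqrt{\frac{2}{1+\lambda_c}}\left(\int_\omega^{\omega+a\sqrt{\lambda_c t/2}}{\rm e}^{{\rm i}\xi^2}\,{\rm d}\xi\right)+{\cal O}\!\left(t^{-\frac12+\frac{3\delta}{2}}a^4\right).$$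
   Context: $F(z;\lambda):=(1-z)\ln(1-z)+z\ln z+z\ln\lambda$ with branch cuts $(-\infty,0]$ and $[1,\infty)$; the integral defining $J_{B1}$ is along the real segment. $f\ll g$ means $f/g\to0$ as $t\to\infty$. *)

theory Defs
  imports "HOL-Analysis.Analysis"
begin

definition F :: "complex \<Rightarrow> real \<Rightarrow> complex" where
  "F z lam = (1 - z) * Ln (1 - z) + z * Ln z + z * Ln (complex_of_real lam)"

definition lam_c :: "real \<Rightarrow> real \<Rightarrow> real" where
  "lam_c \<delta> t = 1 / (t powr (1 - \<delta>) - 1)"

definition Lam :: "real \<Rightarrow> real \<Rightarrow> real \<Rightarrow> real" where
  "Lam \<delta> t lam = lam / lam_c \<delta> t - 1"

definition omega :: "real \<Rightarrow> real \<Rightarrow> real \<Rightarrow> real" where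
  "omega \<delta> t lam = sqrt (lam_c \<delta> t * t / 2) * ln (1 + Lam \<delta> t lam) / (1 + lam_c \<delta> t)"

definition kk :: "real \<Rightarrow> real \<Rightarrow> real \<Rightarrow> real" where
  "kk \<delta> t a = t powr (\<delta> - 1) * (1 - a)"

definition J_B1 :: "real \<Rightarrow> real \<Rightarrow> real \<Rightarrow> real \<Rightarrow> complex" where
  "J_B1 \<delta> a t lam = integral {1 - t powr (\<delta> - 1) .. 1 - kk \<delta> t a}
     (\<lambda>z. complex_of_real ((1 - z) powr (-1/2)) *
          exp (\<i> * complex_of_real t * F (complex_of_real z) lam))"

end

(* Write T = t^(1-\<delta>), so the interval of integration is [z0, z0 + a/T] with z0 = 1 - 1/T.
   Expanding the real phase G = F(.;\<lambda>) to second order at z0 and completing the square with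
   \<xi> = \<omega> + sqrt (\<lambda>_c t/2) T (z - z0) gives t G(z) = t G(z0) - \<omega>^2 + \<xi>^2 + t O(T^2 (z - z0)^3); this
   substitution maps the Fresnel integral of the claim onto the integral over [z0, z0 + a/T] of
   sqrt T exp(i (t G(z0) - \<omega>^2 + \<xi>^2)). Against the true integrand the amplitude (1-z)^(-1/2)
   differs by sqrt T a and the phase by t a^3/T, so on an interval of length a/T the error is
   (a^2 + t a^4/T)/sqrt T = t^((\<delta>-1)/2) (a^2 + t^\<delta> a^4). Finally a >> t^(-\<delta>/2) gives a^2 <= t^\<delta> a^4. *)

theory Submission
  imports Defs "HOL-Probability.Characteristic_Functions" "HOL-Real_Asymp.Real_Asymp"
begin

lemma taylor_second_order_bound:
  fixes f f' f'' f''' :: "real \<Rightarrow> real" and c x M :: real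
  assumes "c \<le> x"
    and "\<And>y. c \<le> y \<Longrightarrow> y \<le> x \<Longrightarrow> (f has_real_derivative f' y) (at y)"
    and "\<And>y. c \<le> y \<Longrightarrow> y \<le> x \<Longrightarrow> (f' has_real_derivative f'' y) (at y)"
    and "\<And>y. c \<le> y \<Longrightarrow> y \<le> x \<Longrightarrow> (f'' has_real_derivative f''' y) (at y)"
    and "\<And>y. c \<le> y \<Longrightarrow> y \<le> x \<Longrightarrow> \<bar>f''' y\<bar> \<le> M"
  shows "\<bar>f x - f c - f' c * (x - c) - f'' c / 2 * (x - c)^2\<bar> \<le> M / 6 * (x - c)^3"
proof (cases "c = x")
  case False
  define D where "D = (\<lambda>m. [f, f', f'', f'''] ! m)"
  have "\<forall>m y. m < 3 \<and> c \<le> y \<and> y \<le> x \<longrightarrow> (D m has_real_derivative D (Suc m) y) (at y)"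
    using assms(2-4) by (auto simp: D_def less_Suc_eq numeral_3_eq_3)
  then obtain y where y: "c < y" "y < x"
    and taylor: "f x = (\<Sum>m<3. D m c / fact m * (x - c)^m) + D 3 y / fact 3 * (x - c)^3"
    using Taylor_up[of 3 D f c x c] False assms(1) by (auto simp: D_def)
  have "\<bar>f x - f c - f' c * (x - c) - f'' c / 2 * (x - c)^2\<bar> = \<bar>f''' y\<bar> / 6 * (x - c)^3"
    using taylor y by (simp add: D_def eval_nat_numeral abs_mult)
  also have "\<dots> \<le> M / 6 * (x - c)^3"
    using assms(5)[of y] y by (intro mult_right_mono divide_right_mono) auto
  finally show ?thesis .
qed simp

lemma inverse_sqrt_one_minus_le:
  fixes u :: real
  assumes "0 \<le> u" "u \<le> 1/2"
  shows "1 / sqrt (1 - u) \<le> 1 + u"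
proof -
  have "1 \<le> (1 + u)^2 * (1 - u)"
  proof -
    have "u * u \<le> 1/2 * (1/2)" using assms by (intro mult_mono) auto
    then have "0 \<le> u * (1 - u - u^2)"
      using assms by (intro mult_nonneg_nonneg) (auto simp: power2_eq_square)
    then show ?thesis by (simp add: algebra_simps power2_eq_square)
  qed
  then have "1 \<le> (1 + u) * sqrt (1 - u)"
    using assms real_sqrt_le_mono[of 1 "(1 + u)^2 * (1 - u)"] by (simp add: real_sqrt_mult)
  then show ?thesis using assms by (simp add: divide_le_eq mult.commute)
qed

lemma norm_mult_iexp_diff_le:
  fixes r s A B :: real
  shows "norm (complex_of_real r * exp (\<i> * complex_of_real A) - complex_of_real s * exp (\<i> * complex_of_real B))
     \<le> \<bar>r - s\<bar> + \<bar>s\<bar> * \<bar>A - B\<bar>"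
proof -
  have "norm (exp (\<i> * complex_of_real A) - exp (\<i> * complex_of_real B))
      = norm (exp (\<i> * complex_of_real (A - B)) - 1)"
  proof -
    have "exp (\<i> * complex_of_real A) - exp (\<i> * complex_of_real B)
        = exp (\<i> * complex_of_real B) * (exp (\<i> * complex_of_real (A - B)) - 1)"
      by (simp add: algebra_simps flip: exp_add)
    then show ?thesis by (simp add: norm_mult)
  qed
  also have "\<dots> \<le> \<bar>A - B\<bar>" using iexp_approx1[of "A - B" 0] by simp
  finally have phase: "norm (exp (\<i> * complex_of_real A) - exp (\<i> * complex_of_real B)) \<le> \<bar>A - B\<bar>" .
  have "complex_of_real r * exp (\<i> * complex_of_real A) - complex_of_real s * exp (\<i> * complex_of_real B)
     = complex_of_real (r - s) * exp (\<i> * complex_of_real A)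
       + complex_of_real s * (exp (\<i> * complex_of_real A) - exp (\<i> * complex_of_real B))"
    by (simp add: algebra_simps)
  also have "norm \<dots> \<le> \<bar>r - s\<bar> + \<bar>s\<bar> * norm (exp (\<i> * complex_of_real A) - exp (\<i> * complex_of_real B))"
    by (rule order_trans[OF norm_triangle_ineq]) (simp add: norm_mult del: of_real_diff)
  also have "\<dots> \<le> \<bar>r - s\<bar> + \<bar>s\<bar> * \<bar>A - B\<bar>"
    using phase by (simp add: mult_left_mono)
  finally show ?thesis .
qed

lemma integral_interval_affine_substitution:
  fixes g :: "real \<Rightarrow> 'a::banach"
  assumes "0 < m" "g integrable_on {p .. p + m * (b - a)}"
  shows "integral {p .. p + m * (b - a)} g = m *\<^sub>R integral {a..b} (\<lambda>x. g (p + m * (x - a)))"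
proof -
  have "(g has_integral integral {p .. p + m * (b - a)} g) (cbox p (p + m * (b - a)))"
    using assms(2) by (simp add: has_integral_integral)
  from has_integral_affinity'[OF this assms(1), of "p - m * a"]
  have "((\<lambda>x. g (p + m * (x - a))) has_integral integral {p .. p + m * (b - a)} g /\<^sub>R m) {a..b}"
    using assms(1) by (simp add: algebra_simps)
  then show ?thesis using assms(1) by (simp add: integral_unique)
qed

lemma eventually_le_of_quotient_tendsto_0:
  fixes f g :: "'a \<Rightarrow> real"
  assumes "((\<lambda>x. f x / g x) \<longlongrightarrow> 0) net" "eventually (\<lambda>x. 0 < g x) net"
  shows "eventually (\<lambda>x. f x \<le> g x) net"
proof -
  have "eventually (\<lambda>x. f x / g x < 1) net" by (rule order_tendstoD(2)[OF assms(1)]) simp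
  with assms(2) show ?thesis by eventually_elim (simp add: divide_less_eq)
qed

lemma one_le_powr_mult_square:
  fixes t \<delta> b :: real
  assumes "0 < t" "t powr (-\<delta>/2) \<le> b"
  shows "1 \<le> t powr \<delta> * b^2"
proof -
  have "(t powr (-\<delta>/2))^2 \<le> b^2" using assms(2) by (intro power_mono) auto
  moreover have "(t powr (-\<delta>/2))^2 = 1 / t powr \<delta>"
    by (simp add: power2_eq_square powr_add[symmetric] powr_minus_divide)
  ultimately show ?thesis using assms(1) by (simp add: divide_le_eq mult.commute)
qed

definition entropy_phase :: "real \<Rightarrow> real \<Rightarrow> real" where
  "entropy_phase lam x = (1 - x) * ln (1 - x) + x * ln x + x * ln lam"

lemma F_of_real:
  assumes "0 < y" "y < 1" "0 < lam"
  shows "F (complex_of_real y) lam = complex_of_real (entropy_phase lam y)"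
proof -
  have "1 - complex_of_real y = complex_of_real (1 - y)" by simp
  then show ?thesis
    unfolding F_def entropy_phase_def using assms by (simp only: Ln_of_real) (simp add: Ln_of_real)
qed

lemma integrand_of_real:
  assumes "0 < x" "x < 1" "0 < lam"
  shows "complex_of_real ((1 - x) powr (-1/2)) * exp (\<i> * complex_of_real t * F (complex_of_real x) lam)
       = complex_of_real (1 / sqrt (1 - x)) * exp (\<i> * complex_of_real (t * entropy_phase lam x))"
  using assms by (simp add: F_of_real powr_minus_divide powr_half_sqrt mult.assoc)

lemma entropy_phase_taylor:
  fixes T lam x :: real
  assumes T: "2 \<le> T" and lam: "0 < lam" and x: "1 - 1/T \<le> x" "x \<le> 1 - 1/(2*T)"
  shows "\<bar>entropy_phase lam x - entropy_phase lam (1 - 1/T) - ln (lam * (T - 1)) * (x - (1 - 1/T))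
           - T^2 / (T - 1) / 2 * (x - (1 - 1/T))^2\<bar> \<le> T^2 * (x - (1 - 1/T))^3"
proof -
  define z0 where "z0 = 1 - 1/T"
  have inside: "1/2 \<le> y \<and> 1/(2*T) \<le> 1 - y" if "z0 \<le> y" "y \<le> x" for y
  proof -
    have "1/T \<le> 1/2" using T by simp
    then show ?thesis using that x unfolding z0_def by linarith
  qed
  have pos: "0 < y \<and> y < 1" if "z0 \<le> y" "y \<le> x" for y
    using inside[OF that] T by (smt (verit) divide_pos_pos)
  have third: "\<bar>- 1/y^2 + 1/(1 - y)^2\<bar> \<le> 6 * T^2" if "z0 \<le> y" "y \<le> x" for y
  proof -
    have "1/y^2 \<le> 1/(1/2)^2"
      using inside[OF that] by (intro divide_left_mono power_mono) auto
    then have "1/y^2 \<le> 4" by (simp add: power2_eq_square)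
    moreover have "1/(1 - y)^2 \<le> 1/(1/(2*T))^2"
    proof -
      have "0 < 1/(2*T)" using T by simp
      then show ?thesis using inside[OF that] by (intro divide_left_mono power_mono mult_pos_pos) auto
    qed
    then have "1/(1 - y)^2 \<le> 4 * T^2" by (simp add: power2_eq_square)
    moreover have "4 \<le> T^2" using power_mono[OF T, of 2] by simp
    moreover have "0 \<le> 1/y^2" "0 \<le> 1/(1 - y)^2" by simp_all
    ultimately show ?thesis by (simp only: abs_le_iff) linarith
  qed
  have "\<bar>entropy_phase lam x - entropy_phase lam z0 - (ln z0 - ln (1 - z0) + ln lam) * (x - z0)
          - (1/z0 + 1/(1 - z0)) / 2 * (x - z0)^2\<bar> \<le> 6 * T^2 / 6 * (x - z0)^3"
  proof (rule taylor_second_order_bound[where f'' = "\<lambda>y. 1/y + 1/(1 - y)"])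
    show "(entropy_phase lam has_real_derivative ln y - ln (1 - y) + ln lam) (at y)"
      if "z0 \<le> y" "y \<le> x" for y
      unfolding entropy_phase_def using pos[OF that] by (auto intro!: derivative_eq_intros)
    show "((\<lambda>y. ln y - ln (1 - y) + ln lam) has_real_derivative 1/y + 1/(1 - y)) (at y)"
      if "z0 \<le> y" "y \<le> x" for y
      using pos[OF that] by (auto intro!: derivative_eq_intros simp: field_simps)
    show "((\<lambda>y. 1/y + 1/(1 - y)) has_real_derivative - 1/y^2 + 1/(1 - y)^2) (at y)"
      if "z0 \<le> y" "y \<le> x" for y
      using pos[OF that] by (auto intro!: derivative_eq_intros simp: field_simps power2_eq_square)
  qed (use x third in \<open>auto simp: z0_def\<close>)
  moreover have "ln z0 - ln (1 - z0) + ln lam = ln (lam * (T - 1))"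
  proof -
    have "z0 = (T - 1) / T" "1 - z0 = 1 / T" using T by (auto simp: z0_def field_simps)
    then show ?thesis using T lam by (simp add: ln_div ln_mult)
  qed
  moreover have "1/z0 + 1/(1 - z0) = T^2 / (T - 1)"
    using T by (simp add: z0_def field_simps power2_eq_square)
  ultimately show ?thesis by (simp add: z0_def)
qed

lemma inverse_sqrt_near_one:
  fixes T a x :: real
  assumes T: "0 < T" and a: "a \<le> 1/2" and x: "1 - 1/T \<le> x" "x \<le> 1 - 1/T + a/T"
  shows "\<bar>1 / sqrt (1 - x) - sqrt T\<bar> \<le> sqrt T * a"
proof -
  define u where "u = T * (x - (1 - 1/T))"
  have "0 \<le> x - (1 - 1/T)" "x - (1 - 1/T) \<le> a/T" using x by auto
  then have u: "0 \<le> u" "u \<le> a"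
    using T mult_left_mono[of "x - (1 - 1/T)" "a/T" T] by (auto simp: u_def)
  have "1 - x = (1 - u) / T" using T by (simp add: u_def field_simps)
  then have eq: "1 / sqrt (1 - x) = sqrt T * (1 / sqrt (1 - u))" by (simp add: real_sqrt_divide)
  have "1 \<le> 1 / sqrt (1 - u)" using u a by simp
  moreover have "1 / sqrt (1 - u) \<le> 1 + a"
    using inverse_sqrt_one_minus_le[of u] u a by simp
  ultimately have "sqrt T * 1 \<le> sqrt T * (1 / sqrt (1 - u))" "sqrt T * (1 / sqrt (1 - u)) \<le> sqrt T * (1 + a)"
    using T by (intro mult_left_mono; simp)+
  then show ?thesis unfolding eq by (simp only: abs_le_iff) (simp add: algebra_simps)
qed

lemma quadratic_phase_approx:
  fixes T t lam a x :: real
  assumes T: "2 \<le> T" and t: "0 < t" and lam: "0 < lam" and a: "a \<le> 1/2"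
    and x: "1 - 1/T \<le> x" "x \<le> 1 - 1/T + a/T"
  defines "c \<equiv> sqrt (1 / (T - 1) * t / 2)"
  defines "w \<equiv> c * ln (lam * (T - 1)) / (1 + 1 / (T - 1))"
  shows "\<bar>t * entropy_phase lam x
           - (t * entropy_phase lam (1 - 1/T) - w^2 + (w + c * T * (x - (1 - 1/T)))^2)\<bar>
         \<le> t * a^3 / T"
proof -
  define d where "d = x - (1 - 1/T)"
  have d: "0 \<le> d" "d \<le> a/T" using x by (auto simp: d_def)
  have c2: "c^2 = t / (T - 1) / 2" using T t by (simp add: c_def)
  have "2 * (c * T) * w = 2 * c^2 * T * ln (lam * (T - 1)) / (1 + 1 / (T - 1))"
    unfolding w_def by (simp add: power2_eq_square)
  also have "\<dots> = t * ln (lam * (T - 1))"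
    unfolding c2 using T by (simp add: field_simps)
  finally have linear: "2 * (c * T) * w = t * ln (lam * (T - 1))" .
  have quadratic: "(c * T)^2 = t * (T^2 / (T - 1) / 2)"
    using T by (simp add: power_mult_distrib c2 field_simps)
  have sq: "(w + c * T * d)^2 = w^2 + 2 * (c * T) * w * d + (c * T)^2 * d^2"
    by (simp add: power2_eq_square algebra_simps)
  have "t * entropy_phase lam x - (t * entropy_phase lam (1 - 1/T) - w^2 + (w + c * T * d)^2)
      = t * (entropy_phase lam x - entropy_phase lam (1 - 1/T) - ln (lam * (T - 1)) * d
             - T^2 / (T - 1) / 2 * d^2)"
    by (simp only: sq linear quadratic) (simp add: algebra_simps)
  also have "\<bar>\<dots>\<bar> \<le> t * (T^2 * d^3)"
  proof -
    have "a/T \<le> 1/(2*T)" using a T by (simp add: field_simps)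
    then have "x \<le> 1 - 1/(2*T)" using x(2) by simp
    from entropy_phase_taylor[OF T lam x(1) this] show ?thesis
      using t by (simp add: abs_mult d_def mult_left_mono)
  qed
  also have "\<dots> \<le> t * (T^2 * (a/T)^3)"
    using d t T by (intro mult_left_mono power_mono) auto
  also have "\<dots> = t * a^3 / T"
    using T by (simp add: power3_eq_cube power2_eq_square field_simps)
  finally show ?thesis by (simp add: d_def)
qed

lemma integrand_quadratic_approx:
  fixes T t lam a x :: real
  assumes T: "2 \<le> T" and t: "0 < t" and lam: "0 < lam" and a: "a \<le> 1/2"
    and x: "1 - 1/T \<le> x" "x \<le> 1 - 1/T + a/T"
  defines "c \<equiv> sqrt (1 / (T - 1) * t / 2)"
  defines "w \<equiv> c * ln (lam * (T - 1)) / (1 + 1 / (T - 1))"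
  shows "norm (complex_of_real ((1 - x) powr (-1/2)) * exp (\<i> * complex_of_real t * F (complex_of_real x) lam)
           - complex_of_real (sqrt T) * exp (\<i> * complex_of_real
               (t * entropy_phase lam (1 - 1/T) - w^2 + (w + c * T * (x - (1 - 1/T)))^2)))
         \<le> sqrt T * (a + t * a^3 / T)"
proof -
  define \<phi> where "\<phi> = t * entropy_phase lam (1 - 1/T) - w^2 + (w + c * T * (x - (1 - 1/T)))^2"
  have "1/T \<le> 1/2" "a/T < 1/T" using T a by (auto simp: field_simps)
  then have "0 < x" "x < 1" using x by linarith+
  then have "norm (complex_of_real ((1 - x) powr (-1/2)) * exp (\<i> * complex_of_real t * F (complex_of_real x) lam)
           - complex_of_real (sqrt T) * exp (\<i> * complex_of_real \<phi>))
      \<le> \<bar>1 / sqrt (1 - x) - sqrt T\<bar> + \<bar>sqrt T\<bar> * \<bar>t * entropy_phase lam x - \<phi>\<bar>"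
    by (simp only: integrand_of_real lam norm_mult_iexp_diff_le)
  also have "\<dots> \<le> sqrt T * a + \<bar>sqrt T\<bar> * (t * a^3 / T)"
  proof (intro add_mono mult_left_mono)
    show "\<bar>1 / sqrt (1 - x) - sqrt T\<bar> \<le> sqrt T * a"
      using inverse_sqrt_near_one[OF _ a x] T by simp
    show "\<bar>t * entropy_phase lam x - \<phi>\<bar> \<le> t * a^3 / T"
      using quadratic_phase_approx[OF T t lam a x] unfolding \<phi>_def c_def w_def .
  qed simp
  finally show ?thesis using T by (simp add: \<phi>_def algebra_simps)
qed

lemma fresnel_integral_as_model_integral:
  fixes T t lam a :: real
  assumes T: "1 < T" and t: "0 < t" and lam: "0 < lam"
  defines "z0 \<equiv> 1 - 1/T"
  defines "c \<equiv> sqrt (1 / (T - 1) * t / 2)"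
  defines "w \<equiv> c * ln (lam * (T - 1)) / (1 + 1 / (T - 1))"
  shows "exp (\<i> * complex_of_real t * F (complex_of_real z0) lam - \<i> * complex_of_real (w\<^sup>2))
           * complex_of_real (t powr (-1/2) * sqrt (2 / (1 + 1 / (T - 1))))
           * integral {w .. w + a * c} (\<lambda>\<xi>. exp (\<i> * complex_of_real (\<xi>\<^sup>2)))
         = integral {z0 .. z0 + a/T} (\<lambda>x. complex_of_real (sqrt T) * exp (\<i> * complex_of_real
             (t * entropy_phase lam z0 - w^2 + (w + c * T * (x - z0))^2)))"
proof -
  define m where "m = c * T"
  define g where "g \<xi> = exp (\<i> * complex_of_real (\<xi>\<^sup>2))" for \<xi> :: real
  define K where "K = exp (\<i> * complex_of_real t * F (complex_of_real z0) lam - \<i> * complex_of_real (w\<^sup>2))"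
  define s where "s = t powr (-1/2) * sqrt (2 / (1 + 1 / (T - 1)))"
  have m: "0 < m" using T t by (simp add: m_def c_def)
  have "s * m = sqrt (t / T) / sqrt t * T"
    using T t by (simp add: s_def m_def c_def powr_minus_divide powr_half_sqrt
        real_sqrt_mult[symmetric] field_simps)
  also have "\<dots> = T / sqrt T" using t by (simp add: real_sqrt_divide)
  finally have "s * m = sqrt T" using T by (simp add: real_div_sqrt)
  moreover have "K = exp (\<i> * complex_of_real (t * entropy_phase lam z0 - w^2))"
  proof -
    have "0 < z0" "z0 < 1" using T by (auto simp: z0_def field_simps)
    then show ?thesis by (simp add: K_def F_of_real lam algebra_simps)
  qed
  ultimately have integrand: "K * complex_of_real s * (complex_of_real m * g (w + m * (x - z0)))
      = complex_of_real (sqrt T) * exp (\<i> * complex_of_real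
          (t * entropy_phase lam z0 - w^2 + (w + m * (x - z0))^2))" for x
    by (simp add: g_def algebra_simps flip: exp_add of_real_mult)
  have "continuous_on A g" for A unfolding g_def by (intro continuous_intros)
  then have "integral {w .. w + m * ((z0 + a/T) - z0)} g
      = m *\<^sub>R integral {z0 .. z0 + a/T} (\<lambda>x. g (w + m * (x - z0)))"
    by (intro integral_interval_affine_substitution m integrable_continuous_interval)
  moreover have "m * ((z0 + a/T) - z0) = a * c" using T by (simp add: m_def)
  ultimately have "K * complex_of_real s * integral {w .. w + a * c} g
      = integral {z0 .. z0 + a/T} (\<lambda>x. K * complex_of_real s * (complex_of_real m * g (w + m * (x - z0))))"
    by (simp add: scaleR_conv_of_real)
  then show ?thesis unfolding integrand unfolding K_def s_def g_def m_def .
qed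

lemma fresnel_approx_error_le:
  fixes T t lam a :: real
  assumes T: "2 \<le> T" and t: "0 < t" and lam: "0 < lam" and a: "0 < a" "a \<le> 1/2"
  defines "z0 \<equiv> 1 - 1/T"
  defines "c \<equiv> sqrt (1 / (T - 1) * t / 2)"
  defines "w \<equiv> c * ln (lam * (T - 1)) / (1 + 1 / (T - 1))"
  shows "norm (integral {z0 .. z0 + a/T}
            (\<lambda>z. complex_of_real ((1 - z) powr (-1/2)) *
                 exp (\<i> * complex_of_real t * F (complex_of_real z) lam))
          - exp (\<i> * complex_of_real t * F (complex_of_real z0) lam - \<i> * complex_of_real (w\<^sup>2))
            * complex_of_real (t powr (-1/2) * sqrt (2 / (1 + 1 / (T - 1))))
            * integral {w .. w + a * c} (\<lambda>\<xi>. exp (\<i> * complex_of_real (\<xi>\<^sup>2))))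
       \<le> (a^2 + t * a^4 / T) / sqrt T"
proof -
  define f where "f = (\<lambda>z. complex_of_real ((1 - z) powr (-1/2)) *
                       exp (\<i> * complex_of_real t * F (complex_of_real z) lam))"
  define h where "h = (\<lambda>x. complex_of_real (sqrt T) * exp (\<i> * complex_of_real
                       (t * entropy_phase lam z0 - w^2 + (w + c * T * (x - z0))^2)))"
  have model: "exp (\<i> * complex_of_real t * F (complex_of_real z0) lam - \<i> * complex_of_real (w\<^sup>2))
            * complex_of_real (t powr (-1/2) * sqrt (2 / (1 + 1 / (T - 1))))
            * integral {w .. w + a * c} (\<lambda>\<xi>. exp (\<i> * complex_of_real (\<xi>\<^sup>2)))
      = integral {z0 .. z0 + a/T} h"
    unfolding h_def z0_def c_def w_def using T t lam by (intro fresnel_integral_as_model_integral) simp_all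
  have inside: "0 < x \<and> x < 1" if "x \<in> {z0 .. z0 + a/T}" for x
  proof -
    have "1/T \<le> 1/2" "a/T < 1/T" using T a by (auto simp: field_simps)
    then show ?thesis using that by (auto simp: z0_def)
  qed
  have "continuous_on {z0 .. z0 + a/T} (\<lambda>x. complex_of_real (1 / sqrt (1 - x)) *
      exp (\<i> * complex_of_real (t * entropy_phase lam x)))"
    unfolding entropy_phase_def by (intro continuous_intros) (use inside in force)+
  then have "continuous_on {z0 .. z0 + a/T} f"
    by (rule continuous_on_eq) (metis f_def inside integrand_of_real lam)
  moreover have "continuous_on {z0 .. z0 + a/T} h"
    unfolding h_def by (intro continuous_intros)
  moreover have "norm (f x - h x) \<le> sqrt T * (a + t * a^3 / T)" if "x \<in> {z0 .. z0 + a/T}" for x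
    using integrand_quadratic_approx[OF T t lam a(2), of x] that
    unfolding f_def h_def z0_def c_def w_def by simp
  ultimately have "norm (integral {z0 .. z0 + a/T} f - integral {z0 .. z0 + a/T} h)
      \<le> sqrt T * (a + t * a^3 / T) * (a/T)"
    using integral_bound[of z0 "z0 + a/T" "\<lambda>x. f x - h x"] a T
    by (simp add: integral_diff integrable_continuous_interval continuous_on_diff)
  also have "\<dots> = (a^2 + t * a^4 / T) / sqrt T"
    using T by (simp add: field_simps power2_eq_square power3_eq_cube eval_nat_numeral)
  finally show ?thesis unfolding model f_def .
qed

lemma J_B1_approx_error_le:
  fixes \<delta> t lam a :: real
  assumes t: "0 < t" and T: "2 \<le> t powr (1 - \<delta>)" and lam: "lam_c \<delta> t \<le> lam"
    and a: "0 < a" "a \<le> 1/2" "1 \<le> t powr \<delta> * a^2"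
  shows "norm (J_B1 \<delta> a t lam
       - exp (\<i> * complex_of_real t * F (complex_of_real (1 - t powr (\<delta> - 1))) lam
              - \<i> * complex_of_real ((omega \<delta> t lam)\<^sup>2))
         * complex_of_real (t powr (-1/2) * sqrt (2 / (1 + lam_c \<delta> t)))
         * integral {omega \<delta> t lam .. omega \<delta> t lam + a * sqrt (lam_c \<delta> t * t / 2)}
             (\<lambda>\<xi>. exp (\<i> * complex_of_real (\<xi>\<^sup>2))))
     \<le> 2 * (t powr (-1/2 + 3 * \<delta> / 2) * a ^ 4)"
proof -
  define T where "T = t powr (1 - \<delta>)"
  have T2: "2 \<le> T" using T by (simp add: T_def)
  have lam_c: "lam_c \<delta> t = 1 / (T - 1)" by (simp add: lam_c_def T_def)
  have "0 < 1 / (T - 1)" using T2 by simp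
  then have lam_pos: "0 < lam" using lam unfolding lam_c by linarith
  have eps: "t powr (\<delta> - 1) = 1 / T"
    by (simp add: T_def powr_minus_divide[symmetric])
  have upper: "1 - kk \<delta> t a = (1 - 1/T) + a/T"
    using T2 by (simp add: kk_def eps field_simps)
  have omega: "omega \<delta> t lam = sqrt (1 / (T - 1) * t / 2) * ln (lam * (T - 1)) / (1 + 1 / (T - 1))"
    using T2 by (simp add: omega_def Lam_def lam_c field_simps)
  have "norm (J_B1 \<delta> a t lam
       - exp (\<i> * complex_of_real t * F (complex_of_real (1 - t powr (\<delta> - 1))) lam
              - \<i> * complex_of_real ((omega \<delta> t lam)\<^sup>2))
         * complex_of_real (t powr (-1/2) * sqrt (2 / (1 + lam_c \<delta> t)))
         * integral {omega \<delta> t lam .. omega \<delta> t lam + a * sqrt (lam_c \<delta> t * t / 2)}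
             (\<lambda>\<xi>. exp (\<i> * complex_of_real (\<xi>\<^sup>2))))
     \<le> (a^2 + t * a^4 / T) / sqrt T"
    unfolding J_B1_def eps upper omega lam_c by (rule fresnel_approx_error_le[OF T2 t lam_pos a(1,2)])
  also have "\<dots> \<le> (t powr \<delta> * a^4 + t powr \<delta> * a^4) / sqrt T"
  proof (intro divide_right_mono add_mono)
    show "a^2 \<le> t powr \<delta> * a^4"
      using mult_left_mono[OF a(3), of "a^2"] by (simp add: power_numeral_reduce algebra_simps)
    have "t / T = t powr \<delta>" using t powr_diff[of t 1 "1 - \<delta>"] by (simp add: T_def)
    then show "t * a^4 / T \<le> t powr \<delta> * a^4" by (simp add: times_divide_eq_left[symmetric] mult.commute)
  qed (use T2 in simp)
  also have "sqrt T = t powr ((1 - \<delta>) / 2)"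
    using t by (simp add: T_def powr_half_sqrt[symmetric] powr_powr)
  also have "(t powr \<delta> * a^4 + t powr \<delta> * a^4) / t powr ((1 - \<delta>) / 2)
      = 2 * (t powr (-1/2 + 3 * \<delta> / 2) * a ^ 4)"
  proof -
    have "t powr \<delta> / t powr ((1 - \<delta>) / 2) = t powr (-1/2 + 3 * \<delta> / 2)"
      by (simp add: powr_diff[symmetric] field_simps)
    then show ?thesis using t by (simp add: field_simps)
  qed
  finally show ?thesis .
qed

theorem lemma4p8:
  fixes \<delta> :: real and a lam :: "real \<Rightarrow> real"
  assumes "0 < \<delta>" "\<delta> < 1"
    and "eventually (\<lambda>t. lam_c \<delta> t \<le> lam t \<and> lam t \<le> t powr (1 - \<delta>) - 1) at_top"
    and "eventually (\<lambda>t. 0 < a t) at_top"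
    and "((\<lambda>t. t powr (-\<delta>/2) / a t) \<longlongrightarrow> 0) at_top"
    and "((\<lambda>t. a t / t powr (-\<delta>/3)) \<longlongrightarrow> 0) at_top"
  shows "\<exists>C. eventually (\<lambda>t.
     norm (J_B1 \<delta> (a t) t (lam t)
       - exp (\<i> * complex_of_real t * F (complex_of_real (1 - t powr (\<delta> - 1))) (lam t)
              - \<i> * complex_of_real ((omega \<delta> t (lam t))\<^sup>2))
         * complex_of_real (t powr (-1/2) * sqrt (2 / (1 + lam_c \<delta> t)))
         * integral {omega \<delta> t (lam t) .. omega \<delta> t (lam t) + a t * sqrt (lam_c \<delta> t * t / 2)}
             (\<lambda>\<xi>. exp (\<i> * complex_of_real (\<xi>\<^sup>2))))
     \<le> C * (t powr (-1/2 + 3 * \<delta> / 2) * (a t) ^ 4)) at_top"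
proof -
  have "eventually (\<lambda>t. 0 < (t::real)) at_top" by real_asymp
  moreover have "eventually (\<lambda>t. 2 \<le> t powr (1 - \<delta>)) at_top" using assms(2) by real_asymp
  moreover have "eventually (\<lambda>t. t powr (-\<delta>/3) \<le> 1/2) at_top" using assms(1) by real_asymp
  moreover have "eventually (\<lambda>t. a t \<le> t powr (-\<delta>/3)) at_top"
    by (rule eventually_le_of_quotient_tendsto_0[OF assms(6)]) real_asymp
  moreover have "eventually (\<lambda>t. t powr (-\<delta>/2) \<le> a t) at_top"
    by (rule eventually_le_of_quotient_tendsto_0[OF assms(5,4)])
  ultimately have "eventually (\<lambda>t. 0 < t \<and> 2 \<le> t powr (1 - \<delta>) \<and> lam_c \<delta> t \<le> lam t
      \<and> 0 < a t \<and> a t \<le> 1/2 \<and> 1 \<le> t powr \<delta> * (a t)^2) at_top"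
    using assms(3,4)
    by eventually_elim (auto intro: one_le_powr_mult_square)
  then show ?thesis
    by - (rule exI[of _ 2], erule eventually_mono, elim conjE, rule J_B1_approx_error_le; assumption)
qed

end
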